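(* Let $W_{\mathfrak{krv}}=\nu(V_{\mathfrak{krv}})$. Then $W_{\mathfrak{krv}}$ is closed under the Poisson bracket $\{f,g\}=[f,g]+d_f(g)-d_g(f)$ and is a Lie algebra under it.
   Context: Let $\mathfrak{lie}_2$ be the degree-completed free Lie algebra over $\mathbb{Q}$ on $x,y$ inside $\mathrm{Ass}_2=\mathbb{Q}\langle\langle x,y\rangle\rangle$; write $f=c+f_xx+f_yy$. For $a,b\in\mathfrak{lie}_2$ ($a$ without linear $x$-term, $b$ without linear $y$-term), $E_{a,b}$ is the derivation $x\mapsto[x,a]$, $y\mapsto[y,b]$; $\mathfrak{sder}_2$ consists of those with $[x,a]+[y,b]=0$. With $\mathrm{tr}$ the projection of $\mathrm{Ass}_2$ onto its quotient by cyclic permutation of words and $\mathrm{div}(E_{a,b})=\mathrm{tr}(a_xx+b_yy)$, $\mathfrak{krv}$ is the weight-$\ge3$ part of the Lie algebra of $E_{a,b}\in\mathfrak{sder}_2$ with $\mathrm{div}(E_{a,b})=\mathrm{tr}(h(x+y)-h(x)-h(y))$ for some one-variable power series $h$ of degree $\ge2$. $V_{\mathfrak{krv}}$ is the space of $b$ such that $E_{a,b}\in\mathfrak{krv}$ for some $a$ (the map $E_{a,b}\mapsto b$ being a linear isomorphism $\mathfrak{krv}\to V_{\mathfrak{krv}}$). $\nu$ is the automorphism of $\mathrm{Ass}_2$ with $\nu(x)=-x-y$, $\nu(y)=y$. For $f\in\mathfrak{lie}_2$, $d_f$ is the derivation with $d_f(x)=0$, $d_f(y)=[y,f]$. *)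

theory Defs
  imports Complex_Main "HOL-Library.Function_Algebras"
begin

text \<open>Elements of the completed free associative algebra Ass_2 = Q<<x,y>> are
  represented as arbitrary coefficient functions on words in the letters x, y
  (no finiteness condition = degree completion). Addition, subtraction, zero and
  finite sums are the pointwise ones (from Function_Algebras); the algebra
  product is smul (concatenation product), NOT the pointwise times.\<close>

datatype letter = X | Y

type_synonym ser = "letter list \<Rightarrow> rat"

definition ssc :: "rat \<Rightarrow> ser \<Rightarrow> ser" where
  "ssc c f = (\<lambda>w. c * f w)"

definition smul :: "ser \<Rightarrow> ser \<Rightarrow> ser" where
  "smul f g = (\<lambda>w. \<Sum>k\<le>length w. f (take k w) * g (drop k w))"

definition sbr :: "ser \<Rightarrow> ser \<Rightarrow> ser" where
  "sbr f g = smul f g - smul g f"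

definition word :: "letter list \<Rightarrow> ser" where
  "word u = (\<lambda>v. if v = u then 1 else 0)"

definition one :: ser where "one = word []"

definition gen :: "letter \<Rightarrow> ser" where
  "gen l = word [l]"

inductive_set lie_poly :: "ser set" where
  gen_in: "gen l \<in> lie_poly"
| add_in: "f \<in> lie_poly \<Longrightarrow> g \<in> lie_poly \<Longrightarrow> f + g \<in> lie_poly"
| sc_in: "f \<in> lie_poly \<Longrightarrow> ssc c f \<in> lie_poly"
| br_in: "f \<in> lie_poly \<Longrightarrow> g \<in> lie_poly \<Longrightarrow> sbr f g \<in> lie_poly"

definition homog :: "nat \<Rightarrow> ser \<Rightarrow> ser" where
  "homog n f = (\<lambda>w. if length w = n then f w else 0)"

definition lie2 :: "ser set" where
  "lie2 = {f. \<forall>n. homog n f \<in> lie_poly}"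

text \<open>For f = c + f_x x + f_y y, rcoef f l is f_l.\<close>
definition rcoef :: "ser \<Rightarrow> letter \<Rightarrow> ser" where
  "rcoef f l = (\<lambda>w. f (w @ [l]))"

text \<open>Continuous derivation of Ass_2 with prescribed values on the letters
  (values without constant term, so the defining sum is finite coefficientwise).\<close>
definition der_word :: "(letter \<Rightarrow> ser) \<Rightarrow> letter list \<Rightarrow> ser" where
  "der_word \<delta> u = (\<Sum>i<length u. smul (smul (word (take i u)) (\<delta> (u ! i))) (word (drop (Suc i) u)))"

definition der :: "(letter \<Rightarrow> ser) \<Rightarrow> ser \<Rightarrow> ser" where
  "der \<delta> f = (\<lambda>v. \<Sum>u\<in>{u. length u \<le> length v}. f u * der_word \<delta> u v)"

text \<open>Continuous algebra endomorphism with prescribed values on the letters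
  (values without constant term).\<close>
definition subst_word :: "(letter \<Rightarrow> ser) \<Rightarrow> letter list \<Rightarrow> ser" where
  "subst_word \<sigma> u = foldr (\<lambda>l acc. smul (\<sigma> l) acc) u one"

definition subst :: "(letter \<Rightarrow> ser) \<Rightarrow> ser \<Rightarrow> ser" where
  "subst \<sigma> f = (\<lambda>v. \<Sum>u\<in>{u. length u \<le> length v}. f u * subst_word \<sigma> u v)"

definition nu :: "ser \<Rightarrow> ser" where
  "nu = subst (\<lambda>l. case l of X \<Rightarrow> - gen X - gen Y | Y \<Rightarrow> gen Y)"

definition E :: "ser \<Rightarrow> ser \<Rightarrow> ser \<Rightarrow> ser" where
  "E a b = der (\<lambda>l. case l of X \<Rightarrow> sbr (gen X) a | Y \<Rightarrow> sbr (gen Y) b)"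

definition d :: "ser \<Rightarrow> ser \<Rightarrow> ser" where
  "d f = der (\<lambda>l. case l of X \<Rightarrow> 0 | Y \<Rightarrow> sbr (gen Y) f)"

text \<open>tr: projection to the quotient by cyclic permutation of words; the class
  of f is represented by the function assigning to each word w the sum of the
  coefficients of f over the cyclic class of w.\<close>
definition trace :: "ser \<Rightarrow> ser" where
  "trace f = (\<lambda>w. \<Sum>v\<in>{rotate k w | k. True}. f v)"

definition divE :: "ser \<Rightarrow> ser \<Rightarrow> ser" where
  "divE a b = trace (smul (rcoef a X) (gen X) + smul (rcoef b Y) (gen Y))"

definition spow :: "ser \<Rightarrow> nat \<Rightarrow> ser" where
  "spow g n = (smul g ^^ n) one"

text \<open>Evaluation of a one-variable power series h = sum_n h_n t^n at g (g without constant term).\<close>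
definition peval :: "(nat \<Rightarrow> rat) \<Rightarrow> ser \<Rightarrow> ser" where
  "peval h g = (\<lambda>v. \<Sum>n\<le>length v. h n * spow g n v)"

text \<open>Membership of E_{a,b} in krv, stated on the pair (a,b) (E_{a,b} determines (a,b)).\<close>
definition krv_pair :: "ser \<Rightarrow> ser \<Rightarrow> bool" where
  "krv_pair a b \<longleftrightarrow>
     a \<in> lie2 \<and> b \<in> lie2 \<and> a [X] = 0 \<and> b [Y] = 0 \<and>
     sbr (gen X) a + sbr (gen Y) b = 0 \<and>
     (\<exists>h::nat \<Rightarrow> rat. h 0 = 0 \<and> h 1 = 0 \<and>
        divE a b = trace (peval h (gen X + gen Y) - peval h (gen X) - peval h (gen Y))) \<and>
     (\<forall>w. length w < 3 \<longrightarrow> a w = 0 \<and> b w = 0)"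

definition V_krv :: "ser set" where
  "V_krv = {b. \<exists>a. krv_pair a b}"

definition W_krv :: "ser set" where
  "W_krv = nu ` V_krv"

definition poisson :: "ser \<Rightarrow> ser \<Rightarrow> ser" where
  "poisson f g = sbr f g + d f g - d g f"

definition lie_algebra_on :: "ser set \<Rightarrow> (ser \<Rightarrow> ser \<Rightarrow> ser) \<Rightarrow> bool" where
  "lie_algebra_on W br \<longleftrightarrow>
     0 \<in> W \<and> (\<forall>f\<in>W. \<forall>g\<in>W. f + g \<in> W) \<and> (\<forall>c. \<forall>f\<in>W. ssc c f \<in> W) \<and>
     (\<forall>f\<in>W. \<forall>g\<in>W. br f g \<in> W) \<and>
     (\<forall>f\<in>W. \<forall>g\<in>W. \<forall>h\<in>W. br (f + g) h = br f h + br g h \<and> br h (f + g) = br h f + br h g) \<and>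
     (\<forall>c. \<forall>f\<in>W. \<forall>g\<in>W. br (ssc c f) g = ssc c (br f g) \<and> br f (ssc c g) = ssc c (br f g)) \<and>
     (\<forall>f\<in>W. br f f = 0) \<and>
     (\<forall>f\<in>W. \<forall>g\<in>W. \<forall>h\<in>W. br f (br g h) + br g (br h f) + br h (br f g) = 0)"

end

theory Submission
  imports Defs
begin

text \<open>
  For a tangential pair, [x,a] + [y,b] = 0, the automorphism \<nu> intertwines E_{a,b} with
  d_{\<nu> b}: both \<nu> \<circ> E_{a,b} and d_{\<nu> b} \<circ> \<nu> are \<nu>-derivations agreeing on x and y.
  Hence the pair (A, B) describing the commutator [E_{a,b}, E_{a',b'}], with
  B = [b,b'] + E_{a,b} b' - E_{a',b'} b, satisfies \<nu> B = {\<nu> b, \<nu> b'}, and closure of W under the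
  Poisson bracket reduces to closure of krv under the commutator. Tangentiality and
  membership in lie_2 are preserved by brackets and derivations. Writing div E_{a,b} = tr \<rho>_{a,b}
  with \<rho>_{a,b} = a_x x + b_y y, the divergence is a cocycle:
  div [E_{a,b}, E_{a',b'}] = tr E_{a,b}(\<rho>_{a',b'}) - tr E_{a',b'}(\<rho>_{a,b}). Since derivations
  preserve trace-zero series, tr E_{a,b}(\<rho>) only depends on tr \<rho>, and E_{a,b} annihilates
  tr (h(x+y) - h(x) - h(y)): it kills powers of x+y and acts on powers of x and y by inner
  derivations, which are trace-free. So the commutator has divergence 0.
  The Lie algebra axioms for the Poisson bracket follow from d_{{f,g}} = [d_f, d_g]
  and the Jacobi identity of the commutator.
\<close>

instance letter :: finite
proof
  have "(UNIV :: letter set) = {X, Y}" using letter.exhaust by auto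
  then show "finite (UNIV :: letter set)" by (metis finite.emptyI finite.insertI)
qed

lemma sum_fun_apply: "(sum F A) w = (\<Sum>x\<in>A. F x w)"
  by (induction A rule: infinite_finite_induct) auto

lemma finite_words_length_le: "finite {u :: letter list. length u \<le> n}"
  using finite_lists_length_le[of "UNIV :: letter set" n] by simp

lemma ssc_apply [simp]: "ssc c f w = c * f w"
  by (simp add: ssc_def)

lemma smul_apply: "smul f g w = (\<Sum>k\<le>length w. f (take k w) * g (drop k w))"
  by (simp add: smul_def)

lemma smul_add_left [simp]: "smul (f + g) h = smul f h + smul g h"
  by (rule ext) (simp add: smul_def distrib_right sum.distrib)
lemma smul_add_right [simp]: "smul f (g + h) = smul f g + smul f h"
  by (rule ext) (simp add: smul_def distrib_left sum.distrib)
lemma smul_diff_left [simp]: "smul (f - g) h = smul f h - smul g h"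
  by (rule ext) (simp add: smul_def left_diff_distrib sum_subtractf)
lemma smul_diff_right [simp]: "smul f (g - h) = smul f g - smul f h"
  by (rule ext) (simp add: smul_def right_diff_distrib sum_subtractf)
lemma smul_uminus_left [simp]: "smul (- f) h = - smul f h"
  by (rule ext) (simp add: smul_def sum_negf)
lemma smul_uminus_right [simp]: "smul f (- h) = - smul f h"
  by (rule ext) (simp add: smul_def sum_negf)
lemma smul_zero_left [simp]: "smul 0 h = 0"
  by (rule ext) (simp add: smul_def)
lemma smul_zero_right [simp]: "smul f 0 = 0"
  by (rule ext) (simp add: smul_def)
lemma smul_ssc_left [simp]: "smul (ssc c f) h = ssc c (smul f h)"
  by (rule ext) (simp add: smul_def sum_distrib_left mult.assoc)
lemma smul_ssc_right [simp]: "smul f (ssc c h) = ssc c (smul f h)"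
  by (rule ext) (simp add: smul_def sum_distrib_left mult.left_commute)

lemma ssc_add [simp]: "ssc c (f + g) = ssc c f + ssc c g"
  by (rule ext) (simp add: distrib_left)
lemma ssc_diff [simp]: "ssc c (f - g) = ssc c f - ssc c g"
  by (rule ext) (simp add: right_diff_distrib)
lemma ssc_trivial [simp]: "ssc c 0 = 0" "ssc 0 f = 0" "ssc 1 f = f"
  by (auto simp: ssc_def)
lemma smul_assoc: "smul (smul f g) h = smul f (smul g h)"
proof (rule ext)
  fix w :: "letter list"
  define n where "n = length w"
  define F where "F = (\<lambda>j i. f (take j w) * g (take i (drop j w)) * h (drop (j + i) w))"
  have "smul (smul f g) h w = (\<Sum>k\<le>n. \<Sum>j\<le>k. F j (k - j))"
    unfolding smul_apply n_def F_def
    by (auto simp: sum_distrib_right min_def take_drop intro!: sum.cong)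
  also have "\<dots> = (\<Sum>(j, i)\<in>{(j, i). j + i \<le> n}. F j i)"
    by (rule sum.triangle_reindex_eq[symmetric])
  also have "\<dots> = (\<Sum>j\<le>n. \<Sum>i\<le>n - j. F j i)"
  proof -
    have "{(j, i). j + i \<le> n} = Sigma {..n} (\<lambda>j. {..n - j})" by auto
    then show ?thesis by (simp add: sum.Sigma)
  qed
  also have "\<dots> = smul f (smul g h) w"
    unfolding smul_apply n_def F_def
    by (auto simp: sum_distrib_left mult.assoc add.commute intro!: sum.cong)
  finally show "smul (smul f g) h w = smul f (smul g h) w" .
qed

lemma word_apply: "word u v = (if v = u then 1 else 0)"
  by (simp add: word_def)

lemma smul_word_word: "smul (word u) (word v) = word (u @ v)"
proof (rule ext)
  fix w :: "letter list"
  have "smul (word u) (word v) w = (\<Sum>k\<le>length w. if k = length u \<and> w = u @ v then 1 else 0)"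
    unfolding smul_apply word_apply by (rule sum.cong) (auto simp: append_eq_conv_conj)
  then show "smul (word u) (word v) w = word (u @ v) w"
    by (auto simp: word_apply)
qed

lemma one_apply: "one w = (if w = [] then 1 else 0)"
  by (simp add: one_def word_def)

lemma smul_one_left [simp]: "smul one f = f"
proof (rule ext)
  fix w :: "letter list"
  have "smul one f w = (\<Sum>k\<le>length w. if k = 0 then f w else 0)"
    unfolding smul_apply one_apply by (rule sum.cong) auto
  then show "smul one f w = f w" by simp
qed

lemma smul_one_right [simp]: "smul f one = f"
proof (rule ext)
  fix w :: "letter list"
  have "smul f one w = (\<Sum>k\<le>length w. if k = length w then f w else 0)"
    unfolding smul_apply one_apply by (rule sum.cong) auto
  then show "smul f one w = f w" by simp
qed

lemma word_Nil: "word [] = one"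
  by (simp add: one_def)

lemma word_Cons: "word (l # w) = smul (gen l) (word w)"
  by (simp add: gen_def smul_word_word)

lemma gen_Nil: "gen l [] = 0"
  by (simp add: gen_def word_apply)

lemma smul_Nil: "smul f g [] = f [] * g []"
  by (simp add: smul_apply)

section \<open>Continuous operators\<close>

definition order_ge :: "nat \<Rightarrow> ser \<Rightarrow> bool" where
  "order_ge p f \<longleftrightarrow> (\<forall>w. length w < p \<longrightarrow> f w = 0)"

lemma order_ge_0 [simp]: "order_ge 0 f"
  by (simp add: order_ge_def)

lemma order_ge_mono: "order_ge p f \<Longrightarrow> q \<le> p \<Longrightarrow> order_ge q f"
  by (auto simp: order_ge_def)

lemma order_ge_add: "order_ge p f \<Longrightarrow> order_ge p g \<Longrightarrow> order_ge p (f + g)"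
  by (simp add: order_ge_def)

lemma order_ge_diff: "order_ge p f \<Longrightarrow> order_ge p g \<Longrightarrow> order_ge p (f - g)"
  by (simp add: order_ge_def)

lemma order_ge_word: "order_ge (length u) (word u)"
  by (auto simp: order_ge_def word_apply)

lemma order_ge_gen: "order_ge 1 (gen l)"
  by (simp add: order_ge_def gen_Nil)

lemma order_ge_smul: "order_ge p f \<Longrightarrow> order_ge q g \<Longrightarrow> order_ge (p + q) (smul f g)"
  unfolding order_ge_def smul_apply
proof (intro allI impI sum.neutral ballI)
  fix w :: "letter list" and k
  assume f: "\<forall>w. length w < p \<longrightarrow> f w = 0" and g: "\<forall>w. length w < q \<longrightarrow> g w = 0"
    and w: "length w < p + q" and k: "k \<in> {..length w}"
  show "f (take k w) * g (drop k w) = 0"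
  proof (cases "k < p")
    case True then show ?thesis using f k by simp
  next
    case False then show ?thesis using g w k by simp
  qed
qed

text \<open>
  A kernel K that never lowers the word length defines, coefficientwise by finite sums, a
  linear operator on the completed algebra; these are the operators continuous for the
  length filtration, and they are determined by their values on words
  (\<open>continuous_op_eqI\<close>). Derivations, substitutions, products and the trace are all of
  this form.
\<close>

definition order_kernel :: "(letter list \<Rightarrow> ser) \<Rightarrow> bool" where
  "order_kernel K \<longleftrightarrow> (\<forall>u. order_ge (length u) (K u))"

definition kernel_op :: "(letter list \<Rightarrow> ser) \<Rightarrow> ser \<Rightarrow> ser" where
  "kernel_op K f = (\<lambda>v. \<Sum>u\<in>{u. length u \<le> length v}. f u * K u v)"

definition continuous_op :: "(ser \<Rightarrow> ser) \<Rightarrow> bool" where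
  "continuous_op T \<longleftrightarrow> (\<exists>K. order_kernel K \<and> T = kernel_op K)"

lemma kernel_op_apply: "kernel_op K f v = (\<Sum>u\<in>{u. length u \<le> length v}. f u * K u v)"
  by (simp add: kernel_op_def)

lemma order_kernel_sum_extend:
  assumes "order_kernel K" "length w \<le> length v"
  shows "(\<Sum>u\<in>{u. length u \<le> length w}. f u * K u w) = (\<Sum>u\<in>{u. length u \<le> length v}. f u * K u w)"
  by (rule sum.mono_neutral_left)
     (use assms finite_words_length_le in \<open>auto simp: order_kernel_def order_ge_def\<close>)

lemma kernel_op_word: "order_kernel K \<Longrightarrow> kernel_op K (word u) = K u"
proof (rule ext)
  fix v assume K: "order_kernel K"
  have "kernel_op K (word u) v = (\<Sum>u'\<in>{u'. length u' \<le> length v}. if u' = u then K u v else 0)"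
    unfolding kernel_op_apply by (rule sum.cong) (auto simp: word_apply)
  also have "\<dots> = K u v"
    using K finite_words_length_le by (auto simp: order_kernel_def order_ge_def sum.delta)
  finally show "kernel_op K (word u) v = K u v" .
qed

lemma kernel_op_kernel_op:
  assumes "order_kernel K1" "order_kernel K2"
  shows "kernel_op K1 (kernel_op K2 f) = kernel_op (\<lambda>u. kernel_op K1 (K2 u)) f"
proof (rule ext)
  fix v :: "letter list"
  let ?S = "\<lambda>v :: letter list. {u :: letter list. length u \<le> length v}"
  have "kernel_op K1 (kernel_op K2 f) v = (\<Sum>w\<in>?S v. (\<Sum>u\<in>?S w. f u * K2 u w) * K1 w v)"
    by (simp add: kernel_op_apply)
  also have "\<dots> = (\<Sum>w\<in>?S v. (\<Sum>u\<in>?S v. f u * K2 u w) * K1 w v)"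
    by (rule sum.cong[OF refl]) (simp add: order_kernel_sum_extend[OF assms(2)])
  also have "\<dots> = (\<Sum>u\<in>?S v. \<Sum>w\<in>?S v. f u * (K2 u w * K1 w v))"
    by (subst sum.swap) (simp add: sum_distrib_right mult.assoc)
  also have "\<dots> = kernel_op (\<lambda>u. kernel_op K1 (K2 u)) f v"
    by (simp add: kernel_op_apply sum_distrib_left)
  finally show "kernel_op K1 (kernel_op K2 f) v = kernel_op (\<lambda>u. kernel_op K1 (K2 u)) f v" .
qed

lemma order_kernel_kernel_op:
  "order_kernel K1 \<Longrightarrow> order_kernel K2 \<Longrightarrow> order_kernel (\<lambda>u. kernel_op K1 (K2 u))"
  unfolding order_kernel_def order_ge_def kernel_op_apply by (auto intro!: sum.neutral)

lemma continuous_op_eqI: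
  assumes "continuous_op P" "continuous_op Q" "\<And>u. P (word u) = Q (word u)"
  shows "P f = Q f"
proof -
  obtain K1 where K1: "order_kernel K1" "P = kernel_op K1"
    using assms(1) by (auto simp: continuous_op_def)
  obtain K2 where K2: "order_kernel K2" "Q = kernel_op K2"
    using assms(2) by (auto simp: continuous_op_def)
  have "K1 = K2"
    using assms(3) K1 K2 by (auto simp: kernel_op_word)
  with K1 K2 show ?thesis by simp
qed

lemma continuous_op_kernel_op: "order_kernel K \<Longrightarrow> continuous_op (kernel_op K)"
  by (auto simp: continuous_op_def)

lemma continuous_op_eq_kernel_op:
  "continuous_op T \<Longrightarrow> T f = kernel_op (\<lambda>u. T (word u)) f"
  by (auto simp: continuous_op_def kernel_op_word)

lemma continuous_op_comp:
  assumes "continuous_op T1" "continuous_op T2"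
  shows "continuous_op (\<lambda>f. T1 (T2 f))"
proof -
  obtain K1 K2 where "order_kernel K1" "T1 = kernel_op K1" "order_kernel K2" "T2 = kernel_op K2"
    using assms by (auto simp: continuous_op_def)
  then show ?thesis unfolding continuous_op_def
    by (intro exI[of _ "\<lambda>u. kernel_op K1 (K2 u)"] conjI)
       (simp_all add: order_kernel_kernel_op kernel_op_kernel_op)
qed

lemma kernel_op_linear:
  "kernel_op K (f + g) = kernel_op K f + kernel_op K g"
  "kernel_op K (f - g) = kernel_op K f - kernel_op K g"
  "kernel_op K (- f) = - kernel_op K f" "kernel_op K 0 = 0"
  "kernel_op K (ssc c f) = ssc c (kernel_op K f)"
  by (simp_all add: kernel_op_def fun_eq_iff distrib_right left_diff_distrib sum.distrib
      sum_subtractf sum_negf sum_distrib_left mult.assoc)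

lemma continuous_op_linear:
  assumes "continuous_op T"
  shows "T (f + g) = T f + T g" "T (f - g) = T f - T g" "T (- f) = - T f" "T 0 = 0"
    "T (ssc c f) = ssc c (T f)"
  using assms by (auto simp: continuous_op_def kernel_op_linear)

lemma continuous_op_add:
  assumes "continuous_op T1" "continuous_op T2"
  shows "continuous_op (\<lambda>f. T1 f + T2 f)"
proof -
  obtain K1 K2 where "order_kernel K1" "T1 = kernel_op K1" "order_kernel K2" "T2 = kernel_op K2"
    using assms by (auto simp: continuous_op_def)
  moreover have "kernel_op (\<lambda>u. K1 u + K2 u) f = kernel_op K1 f + kernel_op K2 f" for f
    by (rule ext) (simp add: kernel_op_def distrib_left sum.distrib)
  ultimately show ?thesis unfolding continuous_op_def
    by (intro exI[of _ "\<lambda>u. K1 u + K2 u"]) (auto simp: order_kernel_def order_ge_add)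
qed

lemma continuous_op_diff:
  assumes "continuous_op T1" "continuous_op T2"
  shows "continuous_op (\<lambda>f. T1 f - T2 f)"
proof -
  obtain K1 K2 where "order_kernel K1" "T1 = kernel_op K1" "order_kernel K2" "T2 = kernel_op K2"
    using assms by (auto simp: continuous_op_def)
  moreover have "kernel_op (\<lambda>u. K1 u - K2 u) f = kernel_op K1 f - kernel_op K2 f" for f
    by (rule ext) (simp add: kernel_op_def right_diff_distrib sum_subtractf)
  ultimately show ?thesis unfolding continuous_op_def
    by (intro exI[of _ "\<lambda>u. K1 u - K2 u"]) (auto simp: order_kernel_def order_ge_diff)
qed

lemma continuous_op_sum:
  assumes "continuous_op T"
  shows "T (sum F A) = (\<Sum>x\<in>A. T (F x))"
proof (induction A rule: infinite_finite_induct)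
  case (insert x A)
  then show ?case
    by (simp only: sum.insert[OF insert(1,2)] continuous_op_linear(1)[OF assms] insert(3))
qed (simp_all only: sum.infinite sum.empty continuous_op_linear(4)[OF assms] not_False_eq_True)

lemma continuous_op_order_ge: "continuous_op T \<Longrightarrow> order_ge p f \<Longrightarrow> order_ge p (T f)"
  by (auto simp: continuous_op_def order_ge_def kernel_op_apply intro!: sum.neutral)

lemma smul_eq_kernel_op_left: "smul f g = kernel_op (\<lambda>u. smul (word u) g) f"
proof (rule ext)
  fix v :: "letter list"
  let ?S = "{u :: letter list. length u \<le> length v}"
  have "kernel_op (\<lambda>u. smul (word u) g) f v
      = (\<Sum>k\<le>length v. \<Sum>u\<in>?S. if u = take k v then f (take k v) * g (drop k v) else 0)"
    unfolding kernel_op_apply smul_apply word_apply sum_distrib_left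
    by (subst sum.swap) (auto intro!: sum.cong)
  also have "\<dots> = smul f g v"
    using finite_words_length_le by (simp add: sum.delta' smul_apply)
  finally show "smul f g v = kernel_op (\<lambda>u. smul (word u) g) f v" ..
qed

lemma smul_eq_kernel_op_right: "smul f g = kernel_op (\<lambda>u. smul f (word u)) g"
proof (rule ext)
  fix v :: "letter list"
  let ?S = "{u :: letter list. length u \<le> length v}"
  have "kernel_op (\<lambda>u. smul f (word u)) g v
      = (\<Sum>k\<le>length v. \<Sum>u\<in>?S. if u = drop k v then f (take k v) * g (drop k v) else 0)"
    unfolding kernel_op_apply smul_apply word_apply sum_distrib_left
    by (subst sum.swap) (auto intro!: sum.cong)
  also have "\<dots> = smul f g v"
    using finite_words_length_le by (simp add: sum.delta' smul_apply)
  finally show "smul f g v = kernel_op (\<lambda>u. smul f (word u)) g v" ..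
qed

lemma continuous_op_smul_left: "continuous_op (\<lambda>f. smul f g)"
proof -
  have "order_kernel (\<lambda>u. smul (word u) g)"
    unfolding order_kernel_def using order_ge_smul[OF order_ge_word order_ge_0] by simp
  then show ?thesis
    unfolding continuous_op_def using smul_eq_kernel_op_left by blast
qed

lemma continuous_op_smul_right: "continuous_op (\<lambda>g. smul f g)"
proof -
  have "order_kernel (\<lambda>u. smul f (word u))"
    unfolding order_kernel_def using order_ge_smul[OF order_ge_0 order_ge_word] by simp
  then show ?thesis
    unfolding continuous_op_def using smul_eq_kernel_op_right by blast
qed

lemmas smul_sum_right = continuous_op_sum[OF continuous_op_smul_right]

declare plus_fun_apply [simp del] zero_fun_apply [simp del] minus_apply [simp del]
  uminus_apply [simp del]

definition const_free :: "(letter \<Rightarrow> ser) \<Rightarrow> bool" where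
  "const_free \<delta> \<longleftrightarrow> (\<forall>l. \<delta> l [] = 0)"

lemma der_word_Nil [simp]: "der_word \<delta> [] = 0"
  by (simp add: der_word_def)

lemma der_word_Cons:
  "der_word \<delta> (l # w) = smul (\<delta> l) (word w) + smul (gen l) (der_word \<delta> w)"
proof -
  have "der_word \<delta> (l # w) = smul (smul (word []) (\<delta> l)) (word w) +
     (\<Sum>i<length w. smul (smul (word (l # take i w)) (\<delta> (w ! i))) (word (drop (Suc i) w)))"
    unfolding der_word_def length_Cons sum.lessThan_Suc_shift by simp
  also have "\<dots> = smul (\<delta> l) (word w) + smul (gen l) (der_word \<delta> w)"
    by (simp add: der_word_def word_Nil word_Cons smul_assoc smul_sum_right)
  finally show ?thesis .
qed

lemma der_word_append:
  "der_word \<delta> (u @ w) = smul (der_word \<delta> u) (word w) + smul (word u) (der_word \<delta> w)"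
  by (induction u) (simp_all add: der_word_Cons word_Cons smul_assoc smul_word_word word_Nil)

lemma order_kernel_der_word: "const_free \<delta> \<Longrightarrow> order_kernel (der_word \<delta>)"
  unfolding order_kernel_def
proof
  fix u assume \<delta>: "const_free \<delta>"
  show "order_ge (length u) (der_word \<delta> u)"
  proof (induction u)
    case (Cons l w)
    have "order_ge 1 (\<delta> l)" using \<delta> by (simp add: const_free_def order_ge_def)
    then show ?case unfolding der_word_Cons
      using order_ge_add[OF order_ge_smul[OF _ order_ge_word] order_ge_smul[OF order_ge_gen Cons]]
      by simp
  qed simp
qed

lemma der_eq_kernel_op: "der \<delta> = kernel_op (der_word \<delta>)"
  by (intro ext) (simp add: der_def kernel_op_def)

lemma continuous_op_der: "const_free \<delta> \<Longrightarrow> continuous_op (der \<delta>)"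
  by (simp add: der_eq_kernel_op continuous_op_kernel_op order_kernel_der_word)

lemma der_word: "const_free \<delta> \<Longrightarrow> der \<delta> (word u) = der_word \<delta> u"
  by (simp add: der_eq_kernel_op kernel_op_word order_kernel_der_word)

lemma der_gen: "const_free \<delta> \<Longrightarrow> der \<delta> (gen l) = \<delta> l"
  by (simp add: gen_def der_word der_word_Cons word_Nil)

lemma der_one: "const_free \<delta> \<Longrightarrow> der \<delta> one = 0"
  by (simp add: one_def der_word)

lemma der_linear:
  assumes "const_free \<delta>"
  shows "der \<delta> (f + g) = der \<delta> f + der \<delta> g" "der \<delta> (f - g) = der \<delta> f - der \<delta> g"
    "der \<delta> (- f) = - der \<delta> f" "der \<delta> 0 = 0" "der \<delta> (ssc c f) = ssc c (der \<delta> f)"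
  using continuous_op_linear[OF continuous_op_der[OF assms]] by auto

text \<open>
  Both sides of each product rule below are continuous in each factor, so it suffices to
  compare them on pairs of words.
\<close>

lemma der_smul:
  assumes \<delta>: "const_free \<delta>"
  shows "der \<delta> (smul f g) = smul (der \<delta> f) g + smul f (der \<delta> g)"
proof -
  have D: "continuous_op (der \<delta>)" using \<delta> by (rule continuous_op_der)
  have words: "der \<delta> (smul (word u) g) = smul (der \<delta> (word u)) g + smul (word u) (der \<delta> g)" for u
    by (rule continuous_op_eqI[where P = "\<lambda>g. der \<delta> (smul (word u) g)"])
       (auto intro!: continuous_op_comp[OF D] continuous_op_smul_right continuous_op_add
          continuous_op_comp[OF continuous_op_smul_right D]
          simp: smul_word_word der_word[OF \<delta>] der_word_append)
  show ?thesis
    by (rule continuous_op_eqI[where P = "\<lambda>f. der \<delta> (smul f g)"])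
       (auto intro!: continuous_op_comp[OF D] continuous_op_smul_left continuous_op_add
          continuous_op_comp[OF continuous_op_smul_left D] words)
qed

lemma subst_word_Cons: "subst_word \<sigma> (l # w) = smul (\<sigma> l) (subst_word \<sigma> w)"
  by (simp add: subst_word_def)

lemma subst_word_append: "subst_word \<sigma> (u @ w) = smul (subst_word \<sigma> u) (subst_word \<sigma> w)"
  by (induction u) (simp_all add: subst_word_def smul_assoc)

lemma order_kernel_subst_word: "const_free \<sigma> \<Longrightarrow> order_kernel (subst_word \<sigma>)"
  unfolding order_kernel_def
proof
  fix u assume \<sigma>: "const_free \<sigma>"
  show "order_ge (length u) (subst_word \<sigma> u)"
  proof (induction u)
    case (Cons l w)
    have "order_ge 1 (\<sigma> l)" using \<sigma> by (simp add: const_free_def order_ge_def)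
    from order_ge_smul[OF this Cons] show ?case by (simp add: subst_word_Cons)
  qed (simp add: subst_word_def)
qed

lemma subst_eq_kernel_op: "subst \<sigma> = kernel_op (subst_word \<sigma>)"
  by (intro ext) (simp add: subst_def kernel_op_def)

lemma continuous_op_subst: "const_free \<sigma> \<Longrightarrow> continuous_op (subst \<sigma>)"
  by (simp add: subst_eq_kernel_op continuous_op_kernel_op order_kernel_subst_word)

lemma subst_word: "const_free \<sigma> \<Longrightarrow> subst \<sigma> (word u) = subst_word \<sigma> u"
  by (simp add: subst_eq_kernel_op kernel_op_word order_kernel_subst_word)

lemma subst_gen: "const_free \<sigma> \<Longrightarrow> subst \<sigma> (gen l) = \<sigma> l"
  by (simp add: gen_def subst_word subst_word_def)

lemma subst_one: "const_free \<sigma> \<Longrightarrow> subst \<sigma> one = one"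
  by (simp add: one_def subst_word subst_word_def)

lemma subst_linear:
  assumes "const_free \<sigma>"
  shows "subst \<sigma> (f + g) = subst \<sigma> f + subst \<sigma> g" "subst \<sigma> (f - g) = subst \<sigma> f - subst \<sigma> g"
    "subst \<sigma> (- f) = - subst \<sigma> f" "subst \<sigma> 0 = 0" "subst \<sigma> (ssc c f) = ssc c (subst \<sigma> f)"
  using continuous_op_linear[OF continuous_op_subst[OF assms]] by auto

lemma subst_smul:
  assumes \<sigma>: "const_free \<sigma>"
  shows "subst \<sigma> (smul f g) = smul (subst \<sigma> f) (subst \<sigma> g)"
proof -
  have S: "continuous_op (subst \<sigma>)" using \<sigma> by (rule continuous_op_subst)
  have words: "subst \<sigma> (smul (word u) g) = smul (subst \<sigma> (word u)) (subst \<sigma> g)" for u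
    by (rule continuous_op_eqI[where P = "\<lambda>g. subst \<sigma> (smul (word u) g)"])
       (auto intro!: continuous_op_comp[OF S] continuous_op_smul_right
          continuous_op_comp[OF continuous_op_smul_right S]
          simp: smul_word_word subst_word[OF \<sigma>] subst_word_append)
  show ?thesis
    by (rule continuous_op_eqI[where P = "\<lambda>f. subst \<sigma> (smul f g)"])
       (auto intro!: continuous_op_comp[OF S] continuous_op_smul_left
          continuous_op_comp[OF continuous_op_smul_left S] words)
qed

lemma sbr_add_left [simp]: "sbr (f + g) h = sbr f h + sbr g h" by (simp add: sbr_def)
lemma sbr_add_right [simp]: "sbr h (f + g) = sbr h f + sbr h g" by (simp add: sbr_def)
lemma sbr_diff_left [simp]: "sbr (f - g) h = sbr f h - sbr g h" by (simp add: sbr_def)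
lemma sbr_diff_right [simp]: "sbr h (f - g) = sbr h f - sbr h g" by (simp add: sbr_def)
lemma sbr_uminus_left [simp]: "sbr (- f) h = - sbr f h" by (simp add: sbr_def)
lemma sbr_uminus_right [simp]: "sbr h (- f) = - sbr h f" by (simp add: sbr_def)
lemma sbr_zero [simp]: "sbr 0 h = 0" "sbr h 0 = 0" by (simp_all add: sbr_def)
lemma sbr_ssc [simp]: "sbr (ssc c f) h = ssc c (sbr f h)" "sbr h (ssc c f) = ssc c (sbr h f)"
  by (simp_all add: sbr_def)
lemma sbr_self [simp]: "sbr f f = 0" by (simp add: sbr_def)

lemma sbr_jacobi: "sbr f (sbr g h) = sbr (sbr f g) h - sbr (sbr f h) g"
  by (simp add: sbr_def smul_assoc algebra_simps)

lemma sbr_gen_Nil: "sbr (gen l) a [] = 0"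
  by (simp add: sbr_def minus_apply smul_Nil gen_Nil)

lemma der_sbr: "const_free \<delta> \<Longrightarrow> der \<delta> (sbr f g) = sbr (der \<delta> f) g + sbr f (der \<delta> g)"
  by (simp add: sbr_def der_linear der_smul)

lemma subst_sbr: "const_free \<sigma> \<Longrightarrow> subst \<sigma> (sbr f g) = sbr (subst \<sigma> f) (subst \<sigma> g)"
  by (simp add: sbr_def subst_linear subst_smul)

definition E_gens :: "ser \<Rightarrow> ser \<Rightarrow> letter \<Rightarrow> ser" where
  "E_gens a b = (\<lambda>l. case l of X \<Rightarrow> sbr (gen X) a | Y \<Rightarrow> sbr (gen Y) b)"

definition d_gens :: "ser \<Rightarrow> letter \<Rightarrow> ser" where
  "d_gens f = (\<lambda>l. case l of X \<Rightarrow> 0 | Y \<Rightarrow> sbr (gen Y) f)"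

definition nu_gens :: "letter \<Rightarrow> ser" where
  "nu_gens = (\<lambda>l. case l of X \<Rightarrow> - gen X - gen Y | Y \<Rightarrow> gen Y)"

lemma E_eq_der: "E a b = der (E_gens a b)"
  by (simp add: E_def E_gens_def)
lemma d_eq_der: "d f = der (d_gens f)"
  by (simp add: d_def d_gens_def)
lemma nu_eq_subst: "nu = subst nu_gens"
  by (simp add: nu_def nu_gens_def)

lemma const_free_E_gens: "const_free (E_gens a b)"
  by (auto simp: const_free_def E_gens_def sbr_gen_Nil split: letter.split)
lemma const_free_d_gens: "const_free (d_gens f)"
  by (auto simp: const_free_def d_gens_def sbr_gen_Nil zero_fun_apply split: letter.split)
lemma const_free_nu_gens: "const_free nu_gens"
  by (auto simp: const_free_def nu_gens_def gen_Nil minus_apply uminus_apply split: letter.split)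

lemma continuous_op_E: "continuous_op (E a b)"
  by (simp add: E_eq_der continuous_op_der[OF const_free_E_gens])
lemma continuous_op_d: "continuous_op (d h)"
  by (simp add: d_eq_der continuous_op_der[OF const_free_d_gens])
lemma continuous_op_nu: "continuous_op nu"
  by (simp add: nu_eq_subst continuous_op_subst[OF const_free_nu_gens])

lemmas E_linear = continuous_op_linear[OF continuous_op_E]
lemmas d_linear = continuous_op_linear[OF continuous_op_d]
lemmas nu_linear = continuous_op_linear[OF continuous_op_nu]

lemma E_gen: "E a b (gen X) = sbr (gen X) a" "E a b (gen Y) = sbr (gen Y) b"
  by (simp_all add: E_eq_der der_gen[OF const_free_E_gens], simp_all add: E_gens_def)
lemma d_gen: "d h (gen X) = 0" "d h (gen Y) = sbr (gen Y) h"
  by (simp_all add: d_eq_der der_gen[OF const_free_d_gens], simp_all add: d_gens_def)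
lemma nu_gen: "nu (gen X) = - gen X - gen Y" "nu (gen Y) = gen Y"
  by (simp_all add: nu_eq_subst subst_gen[OF const_free_nu_gens], simp_all add: nu_gens_def)

lemma E_one: "E a b one = 0"
  by (simp add: E_eq_der der_one[OF const_free_E_gens])
lemma d_one: "d h one = 0"
  by (simp add: d_eq_der der_one[OF const_free_d_gens])
lemma nu_one: "nu one = one"
  by (simp add: nu_eq_subst subst_one[OF const_free_nu_gens])

lemma E_smul: "E a b (smul f g) = smul (E a b f) g + smul f (E a b g)"
  by (simp add: E_eq_der der_smul[OF const_free_E_gens])
lemma d_smul: "d h (smul f g) = smul (d h f) g + smul f (d h g)"
  by (simp add: d_eq_der der_smul[OF const_free_d_gens])
lemma nu_smul: "nu (smul f g) = smul (nu f) (nu g)"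
  by (simp add: nu_eq_subst subst_smul[OF const_free_nu_gens])

lemma E_sbr: "E a b (sbr f g) = sbr (E a b f) g + sbr f (E a b g)"
  by (simp add: E_eq_der der_sbr[OF const_free_E_gens])
lemma d_sbr: "d h (sbr f g) = sbr (d h f) g + sbr f (d h g)"
  by (simp add: d_eq_der der_sbr[OF const_free_d_gens])
lemma nu_sbr: "nu (sbr f g) = sbr (nu f) (nu g)"
  by (simp add: nu_eq_subst subst_sbr[OF const_free_nu_gens])

definition tangential :: "ser \<Rightarrow> ser \<Rightarrow> bool" where
  "tangential a b \<longleftrightarrow> sbr (gen X) a + sbr (gen Y) b = 0"

text \<open>
  When E_{a,b} and E_{a',b'} are tangential, their commutator is E_{A,B} with
  A = \<open>bracket_fst a b a' b'\<close> and B = \<open>bracket_snd a b a' b'\<close>.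
\<close>

definition bracket_fst :: "ser \<Rightarrow> ser \<Rightarrow> ser \<Rightarrow> ser \<Rightarrow> ser" where
  "bracket_fst a b a' b' = sbr a a' + E a b a' - E a' b' a"

definition bracket_snd :: "ser \<Rightarrow> ser \<Rightarrow> ser \<Rightarrow> ser \<Rightarrow> ser" where
  "bracket_snd a b a' b' = sbr b b' + E a b b' - E a' b' b"

lemma tangential_bracket:
  assumes "tangential a b" "tangential a' b'"
  shows "tangential (bracket_fst a b a' b') (bracket_snd a b a' b')"
proof -
  have "E a b (sbr (gen X) a' + sbr (gen Y) b') = 0" "E a' b' (sbr (gen X) a + sbr (gen Y) b) = 0"
    using assms by (simp_all add: tangential_def E_linear)
  then have "sbr (gen X) (bracket_fst a b a' b') + sbr (gen Y) (bracket_snd a b a' b')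
      = sbr (gen X) (bracket_fst a b a' b') + sbr (gen Y) (bracket_snd a b a' b')
        - E a b (sbr (gen X) a' + sbr (gen Y) b') + E a' b' (sbr (gen X) a + sbr (gen Y) b)"
    by simp
  also have "\<dots> = 0"
    \<comment> \<open>by the Jacobi identity\<close>
    unfolding bracket_fst_def bracket_snd_def
    by (simp only: E_linear E_sbr E_gen) (simp add: sbr_def smul_assoc algebra_simps)
  finally show ?thesis by (simp add: tangential_def)
qed

lemma nu_E:
  assumes "tangential a b"
  shows "nu (E a b c) = d (nu b) (nu c)"
proof (rule continuous_op_eqI[where P = "\<lambda>c. nu (E a b c)" and Q = "\<lambda>c. d (nu b) (nu c)"])
  show "continuous_op (\<lambda>c. nu (E a b c))"
    by (rule continuous_op_comp[OF continuous_op_nu continuous_op_E])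
  show "continuous_op (\<lambda>c. d (nu b) (nu c))"
    by (rule continuous_op_comp[OF continuous_op_d continuous_op_nu])
  have "sbr (- gen X - gen Y) (nu a) + sbr (gen Y) (nu b) = 0"
    using arg_cong[OF assms[unfolded tangential_def], of nu] by (simp add: nu_linear nu_sbr nu_gen)
  then have gens: "nu (E a b (gen l)) = d (nu b) (nu (gen l))" for l
    by (cases l) (simp_all add: E_gen nu_sbr nu_gen d_linear d_gen eq_neg_iff_add_eq_0 add.commute)
  fix u show "nu (E a b (word u)) = d (nu b) (nu (word u))"
    by (induction u) (simp_all add: word_Nil E_one nu_one d_one nu_linear word_Cons E_smul nu_smul
        d_smul gens)
qed

lemma der_add_gens: "der (\<lambda>l. \<delta>1 l + \<delta>2 l) f = der \<delta>1 f + der \<delta>2 f"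
  by (rule ext) (simp add: der_def der_word_def sum.distrib plus_fun_apply distrib_left)

lemma der_ssc_gens: "der (\<lambda>l. ssc c (\<delta> l)) f = ssc c (der \<delta> f)"
proof -
  have "der_word (\<lambda>l. ssc c (\<delta> l)) u = ssc c (der_word \<delta> u)" for u
    by (rule ext) (simp add: der_word_def sum_fun_apply sum_distrib_left)
  then show ?thesis
    by (intro ext) (simp add: der_def sum_distrib_left mult.left_commute)
qed

lemma d_add: "d (f + g) h = d f h + d g h"
proof -
  have "d_gens (f + g) = (\<lambda>l. d_gens f l + d_gens g l)"
    by (rule ext) (simp add: d_gens_def split: letter.split)
  then show ?thesis by (simp add: d_eq_der der_add_gens)
qed

lemma d_ssc: "d (ssc c f) h = ssc c (d f h)"
proof -
  have "d_gens (ssc c f) = (\<lambda>l. ssc c (d_gens f l))"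
    by (rule ext) (simp add: d_gens_def split: letter.split)
  then show ?thesis by (simp add: d_eq_der der_ssc_gens)
qed

lemma d_poisson: "d (poisson g h) f = d g (d h f) - d h (d g f)"
proof (rule continuous_op_eqI[where P = "d (poisson g h)"])
  show "continuous_op (d (poisson g h))" by (rule continuous_op_d)
  show "continuous_op (\<lambda>f. d g (d h f) - d h (d g f))"
    by (intro continuous_op_diff continuous_op_comp[OF continuous_op_d continuous_op_d])
  have gens: "d (poisson g h) (gen l) = d g (d h (gen l)) - d h (d g (gen l))" for l
    by (cases l) (simp_all add: d_gen d_linear d_sbr poisson_def sbr_jacobi)
  fix u show "d (poisson g h) (word u) = d g (d h (word u)) - d h (d g (word u))"
  proof (induction u)
    case (Cons l w)
    show ?case by (simp add: word_Cons d_smul d_linear gens Cons.IH algebra_simps)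
  qed (simp add: word_Nil d_one d_linear)
qed

lemma poisson_jacobi:
  "poisson f (poisson g h) + poisson g (poisson h f) + poisson h (poisson f g) = 0"
proof -
  have expand: "poisson f (poisson g h) = sbr f (sbr g h) + sbr f (d g h) - sbr f (d h g)
     + (sbr (d f g) h + sbr g (d f h) + d f (d g h) - d f (d h g))
     - (d g (d h f) - d h (d g f))" for f g h
    by (simp only: poisson_def[of f "poisson g h"] d_poisson) (simp add: poisson_def d_linear d_sbr)
  show ?thesis unfolding expand by (simp add: sbr_def smul_assoc algebra_simps)
qed

lemma poisson_bilinear:
  "poisson (f + g) h = poisson f h + poisson g h"
  "poisson h (f + g) = poisson h f + poisson h g"
  "poisson (ssc c f) g = ssc c (poisson f g)"
  "poisson f (ssc c g) = ssc c (poisson f g)"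
  "poisson f f = 0"
  by (simp_all add: poisson_def d_add d_linear d_ssc algebra_simps)

section \<open>The trace\<close>

definition cyc_class :: "letter list \<Rightarrow> letter list set" where
  "cyc_class w = {rotate k w | k. True}"

lemma trace_eq_sum_cyc_class: "trace f w = (\<Sum>v\<in>cyc_class w. f v)"
  by (simp add: trace_def cyc_class_def)

lemma cyc_class_eq_image: "cyc_class w = (\<lambda>k. rotate k w) ` {..length w}"
proof
  show "cyc_class w \<subseteq> (\<lambda>k. rotate k w) ` {..length w}"
  proof
    fix v assume "v \<in> cyc_class w"
    then obtain k where v: "v = rotate k w" by (auto simp: cyc_class_def)
    show "v \<in> (\<lambda>k. rotate k w) ` {..length w}"
    proof (cases "w = []")
      case False
      then have "k mod length w \<le> length w" by (simp add: less_imp_le)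
      moreover have "v = rotate (k mod length w) w" using v rotate_conv_mod by metis
      ultimately show ?thesis by blast
    qed (use v in auto)
  qed
qed (auto simp: cyc_class_def)

lemma finite_cyc_class: "finite (cyc_class w)"
  by (simp add: cyc_class_eq_image)

lemma length_cyc_class: "v \<in> cyc_class w \<Longrightarrow> length v = length w"
  by (auto simp: cyc_class_def)

lemma rotate_in_cyc_class: "rotate k w \<in> cyc_class w"
  by (auto simp: cyc_class_def)

lemma self_in_cyc_class: "w \<in> cyc_class w"
  using rotate_in_cyc_class[of 0 w] by simp

lemma cyc_class_sym: "v \<in> cyc_class w \<Longrightarrow> w \<in> cyc_class v"
proof -
  assume "v \<in> cyc_class w"
  then obtain k where v: "v = rotate k w" by (auto simp: cyc_class_def)
  show "w \<in> cyc_class v"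
  proof (cases "w = []")
    case False
    have "rotate (k * (length w - 1)) v = rotate (k * (length w - 1) + k) w"
      using v by (simp add: rotate_rotate)
    also have "k * (length w - 1) + k = k * length w"
      using False by (cases "length w") (auto simp: algebra_simps)
    also have "rotate (k * length w) w = w" by simp
    finally show ?thesis using rotate_in_cyc_class by metis
  qed (use v in \<open>simp add: self_in_cyc_class\<close>)
qed

lemma cyc_class_eq: "v \<in> cyc_class w \<Longrightarrow> cyc_class v = cyc_class w"
proof -
  have sub: "cyc_class v \<subseteq> cyc_class w" if "v \<in> cyc_class w" for v w
    using that by (auto simp: cyc_class_def rotate_rotate)
  show "v \<in> cyc_class w \<Longrightarrow> cyc_class v = cyc_class w"
    using sub cyc_class_sym by (metis subset_antisym)
qed

lemma append_in_cyc_class_swap: "u @ v \<in> cyc_class w \<longleftrightarrow> v @ u \<in> cyc_class w"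
proof -
  have "v @ u \<in> cyc_class (u @ v)" for u v :: "letter list"
    using rotate_in_cyc_class[of "length u" "u @ v"] by (simp add: rotate_append)
  then show ?thesis using cyc_class_eq by metis
qed

lemma trace_word: "trace (word u) w = (if u \<in> cyc_class w then 1 else 0)"
  unfolding trace_eq_sum_cyc_class word_apply using finite_cyc_class by (simp add: sum.delta')

lemma continuous_op_trace: "continuous_op trace"
proof -
  have "trace = kernel_op (\<lambda>u. trace (word u))"
  proof (intro ext)
    fix f w
    have "kernel_op (\<lambda>u. trace (word u)) f w
        = (\<Sum>u\<in>{u. length u \<le> length w}. if u \<in> cyc_class w then f u else 0)"
      unfolding kernel_op_apply trace_word by (rule sum.cong) auto
    also have "\<dots> = trace f w"
      using finite_words_length_le length_cyc_class
      by (subst sum.If_cases) (auto intro!: sum.cong simp: Int_absorb1 subset_iff trace_eq_sum_cyc_class)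
    finally show "trace f w = kernel_op (\<lambda>u. trace (word u)) f w" ..
  qed
  moreover have "order_kernel (\<lambda>u. trace (word u))"
    by (auto simp: order_kernel_def order_ge_def trace_word dest: length_cyc_class)
  ultimately show ?thesis by (metis continuous_op_kernel_op)
qed

lemmas trace_linear = continuous_op_linear[OF continuous_op_trace]

lemma trace_smul_commute: "trace (smul f g) = trace (smul g f)"
proof (rule continuous_op_eqI[where P = "\<lambda>f. trace (smul f g)"])
  show "continuous_op (\<lambda>f. trace (smul f g))" "continuous_op (\<lambda>f. trace (smul g f))"
    by (rule continuous_op_comp[OF continuous_op_trace continuous_op_smul_left],
        rule continuous_op_comp[OF continuous_op_trace continuous_op_smul_right])
  fix u show "trace (smul (word u) g) = trace (smul g (word u))"
  proof (rule continuous_op_eqI[where P = "\<lambda>g. trace (smul (word u) g)"])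
    show "continuous_op (\<lambda>g. trace (smul (word u) g))" "continuous_op (\<lambda>g. trace (smul g (word u)))"
      by (rule continuous_op_comp[OF continuous_op_trace continuous_op_smul_right],
          rule continuous_op_comp[OF continuous_op_trace continuous_op_smul_left])
    fix v show "trace (smul (word u) (word v)) = trace (smul (word v) (word u))"
      by (rule ext) (simp add: smul_word_word trace_word append_in_cyc_class_swap)
  qed
qed

lemma trace_sbr: "trace (sbr f g) = 0"
  by (simp add: sbr_def trace_linear trace_smul_commute)

lemma sum_words_length_le_by_cyc_class:
  "(\<Sum>u\<in>{u. length u \<le> n}. F u) = (\<Sum>C\<in>cyc_class ` {u. length u \<le> n}. \<Sum>u\<in>C. F u)"
proof -
  have "\<Union>(cyc_class ` {u. length u \<le> n}) = {u. length u \<le> n}"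
    using self_in_cyc_class length_cyc_class by fastforce
  moreover have "(\<Sum>u\<in>\<Union>(cyc_class ` {u. length u \<le> n}). F u)
      = (\<Sum>C\<in>cyc_class ` {u. length u \<le> n}. \<Sum>u\<in>C. F u)"
    by (rule sum.Union_disjoint[unfolded comp_def])
       (use finite_cyc_class cyc_class_eq in blast)+
  ultimately show ?thesis by simp
qed

lemma continuous_op_trace_zero:
  assumes T: "continuous_op T" and cyc: "\<And>u v. v \<in> cyc_class u \<Longrightarrow> T (word v) = T (word u)"
    and f: "trace f = 0"
  shows "T f = 0"
proof (rule ext)
  fix w
  have "T f w = (\<Sum>C\<in>cyc_class ` {u. length u \<le> length w}. \<Sum>u\<in>C. f u * T (word u) w)"
    by (simp add: continuous_op_eq_kernel_op[OF T, of f] kernel_op_apply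
        sum_words_length_le_by_cyc_class)
  also have "\<dots> = 0"
  proof (rule sum.neutral, rule ballI)
    fix C assume "C \<in> cyc_class ` {u. length u \<le> length w}"
    then obtain u where C: "C = cyc_class u" by blast
    have "(\<Sum>v\<in>cyc_class u. f v * T (word v) w) = trace f u * T (word u) w"
      by (simp add: trace_eq_sum_cyc_class sum_distrib_right cyc)
    then show "(\<Sum>v\<in>C. f v * T (word v) w) = 0" using C f by (simp add: zero_fun_apply)
  qed
  finally show "T f w = 0 w" by (simp add: zero_fun_apply)
qed

lemma trace_der_word_rotate1:
  assumes \<delta>: "const_free \<delta>"
  shows "trace (der \<delta> (word (rotate1 u))) = trace (der \<delta> (word u))"
proof (cases u)
  case (Cons l r)
  have "word (r @ [l]) = smul (word r) (gen l)" by (simp add: gen_def smul_word_word)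
  then show ?thesis using Cons
    by (simp add: word_Cons der_smul[OF \<delta>] der_gen[OF \<delta>] trace_linear
        trace_smul_commute[of "\<delta> l"] trace_smul_commute[of "gen l"] add.commute)
qed simp

lemma trace_der_word_rotate:
  "const_free \<delta> \<Longrightarrow> trace (der \<delta> (word (rotate k u))) = trace (der \<delta> (word u))"
  by (induction k) (simp_all add: trace_der_word_rotate1)

lemma trace_der_eq_0:
  assumes \<delta>: "const_free \<delta>" and f: "trace f = 0"
  shows "trace (der \<delta> f) = 0"
  by (rule continuous_op_trace_zero[OF continuous_op_comp[OF continuous_op_trace
        continuous_op_der[OF \<delta>]] _ f])
     (auto simp: cyc_class_def trace_der_word_rotate[OF \<delta>])

lemma trace_E_cong: "trace f = trace g \<Longrightarrow> trace (E a b f) = trace (E a b g)"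
  using trace_der_eq_0[OF const_free_E_gens, of "f - g" a b]
  by (simp add: E_eq_der[symmetric] E_linear trace_linear)

section \<open>The divergence\<close>

lemma rcoef_apply: "rcoef f l w = f (w @ [l])"
  by (simp add: rcoef_def)

lemma rcoef_linear [simp]:
  "rcoef (f + g) l = rcoef f l + rcoef g l" "rcoef (f - g) l = rcoef f l - rcoef g l"
  "rcoef (- f) l = - rcoef f l" "rcoef 0 l = 0" "rcoef (ssc c f) l = ssc c (rcoef f l)"
  by (auto simp: fun_eq_iff rcoef_apply plus_fun_apply minus_apply uminus_apply zero_fun_apply)

lemma rcoef_gen: "rcoef (gen m) l = (if m = l then one else 0)"
  by (auto simp: fun_eq_iff rcoef_apply gen_def word_apply one_apply zero_fun_apply)

lemma rcoef_smul: "rcoef (smul f g) l = smul f (rcoef g l) + ssc (g []) (rcoef f l)"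
proof (rule ext)
  fix w :: "letter list"
  have "rcoef (smul f g) l w
      = (\<Sum>k\<le>length w. f (take k w) * g (drop k w @ [l])) + f (w @ [l]) * g []"
    by (simp add: rcoef_apply smul_apply sum.atMost_Suc)
  then show "rcoef (smul f g) l w = (smul f (rcoef g l) + ssc (g []) (rcoef f l)) w"
    by (simp add: plus_fun_apply smul_apply rcoef_apply mult.commute)
qed

lemma rcoef_sbr:
  "f [] = 0 \<Longrightarrow> g [] = 0 \<Longrightarrow> rcoef (sbr f g) l = smul f (rcoef g l) - smul g (rcoef f l)"
  by (simp add: sbr_def rcoef_smul)

lemma ser_decomp: "f = ssc (f []) one + smul (rcoef f X) (gen X) + smul (rcoef f Y) (gen Y)"
proof (rule ext)
  fix w :: "letter list"
  show "f w = (ssc (f []) one + smul (rcoef f X) (gen X) + smul (rcoef f Y) (gen Y)) w"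
  proof (cases w rule: rev_exhaust)
    case Nil
    then show ?thesis by (simp add: plus_fun_apply one_apply smul_Nil gen_Nil)
  next
    case (snoc w' m)
    have "smul g (gen l) (w' @ [m]) = (if l = m then g w' else 0)" for g l
      using fun_cong[OF rcoef_smul[of g "gen l" m], of w']
      by (simp add: rcoef_apply rcoef_gen gen_Nil plus_fun_apply zero_fun_apply)
    then show ?thesis using snoc
      by (cases m) (simp_all add: plus_fun_apply one_apply rcoef_apply)
  qed
qed

lemma rcoef_der:
  assumes \<delta>: "const_free \<delta>"
  shows "rcoef (der \<delta> f) l
    = der \<delta> (rcoef f l) + smul (rcoef f X) (rcoef (\<delta> X) l) + smul (rcoef f Y) (rcoef (\<delta> Y) l)"
proof -
  have "der \<delta> f = der \<delta> (ssc (f []) one + smul (rcoef f X) (gen X) + smul (rcoef f Y) (gen Y))"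
    by (subst ser_decomp) (rule refl)
  also have "\<dots> = smul (der \<delta> (rcoef f X)) (gen X) + smul (rcoef f X) (\<delta> X)
      + smul (der \<delta> (rcoef f Y)) (gen Y) + smul (rcoef f Y) (\<delta> Y)"
    by (simp add: der_linear[OF \<delta>] der_smul[OF \<delta>] der_one[OF \<delta>] der_gen[OF \<delta>])
  finally show ?thesis
    using \<delta> by (cases l) (simp_all add: const_free_def rcoef_smul rcoef_gen gen_Nil)
qed

lemma rcoef_E:
  "rcoef (E a b f) l = E a b (rcoef f l) + smul (rcoef f X) (rcoef (sbr (gen X) a) l)
     + smul (rcoef f Y) (rcoef (sbr (gen Y) b) l)"
  unfolding E_eq_der using rcoef_der[OF const_free_E_gens] by (simp add: E_gens_def)

definition div_density :: "ser \<Rightarrow> ser \<Rightarrow> ser" where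
  "div_density a b = smul (rcoef a X) (gen X) + smul (rcoef b Y) (gen Y)"

lemma divE_eq_trace_div_density: "divE a b = trace (div_density a b)"
  by (simp add: divE_def div_density_def)

lemma divE_bracket:
  assumes "a [] = 0" "b [] = 0" "a' [] = 0" "b' [] = 0"
  shows "divE (bracket_fst a b a' b') (bracket_snd a b a' b')
       = trace (E a b (div_density a' b')) - trace (E a' b' (div_density a b))"
  using assms
  \<comment> \<open>after expansion, the remaining terms cancel in pairs by cyclic invariance of the trace\<close>
  by (simp add: divE_def div_density_def bracket_fst_def bracket_snd_def rcoef_E rcoef_sbr
      gen_Nil rcoef_gen rcoef_smul E_linear E_smul E_gen trace_linear)
    (simp add: sbr_def smul_assoc trace_linear
      trace_smul_commute[of a "smul (rcoef a' X) (gen X)", simplified smul_assoc]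
      trace_smul_commute[of b "smul (rcoef b' Y) (gen Y)", simplified smul_assoc]
      trace_smul_commute[of a' "smul (rcoef a X) (gen X)", simplified smul_assoc]
      trace_smul_commute[of b' "smul (rcoef b Y) (gen Y)", simplified smul_assoc]
      trace_smul_commute[of "smul (rcoef a' X) (gen X)" "smul (rcoef a X) (gen X)", simplified smul_assoc]
      trace_smul_commute[of "smul (rcoef b' Y) (gen Y)" "smul (rcoef b Y) (gen Y)", simplified smul_assoc]
      trace_smul_commute[of "smul (rcoef a' Y) (gen Y)" "smul (rcoef b X) (gen X)", simplified smul_assoc]
      trace_smul_commute[of "smul (rcoef b' X) (gen X)" "smul (rcoef a Y) (gen Y)", simplified smul_assoc])

lemma divE_add: "divE (a + a') (b + b') = divE a b + divE a' b'"
  by (simp add: divE_def trace_linear algebra_simps)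

lemma divE_ssc: "divE (ssc c a) (ssc c b) = ssc c (divE a b)"
  by (simp add: divE_eq_trace_div_density div_density_def trace_linear)

lemma spow_0: "spow g 0 = one"
  by (simp add: spow_def)

lemma spow_Suc: "spow g (Suc n) = smul g (spow g n)"
  by (simp add: spow_def)

lemma order_ge_spow: "order_ge 1 g \<Longrightarrow> order_ge n (spow g n)"
  by (induction n) (simp_all add: spow_Suc order_ge_smul[of 1 g, simplified])

lemma continuous_op_peval:
  assumes T: "continuous_op T" and g: "order_ge 1 g"
  shows "T (peval h g) v = (\<Sum>n\<le>length v. h n * T (spow g n) v)"
proof -
  obtain K where K: "order_kernel K" "T = kernel_op K" using T by (auto simp: continuous_op_def)
  let ?S = "{u :: letter list. length u \<le> length v}"
  have short: "(\<Sum>n\<le>length u. h n * spow g n u) = (\<Sum>n\<le>length v. h n * spow g n u)" if "u \<in> ?S" for u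
    by (rule sum.mono_neutral_left)
       (use that order_ge_spow[OF g] in \<open>auto simp: order_ge_def\<close>)
  have "T (peval h g) v = (\<Sum>u\<in>?S. (\<Sum>n\<le>length v. h n * spow g n u) * K u v)"
    by (simp add: K kernel_op_apply peval_def short)
  also have "\<dots> = (\<Sum>n\<le>length v. \<Sum>u\<in>?S. h n * (spow g n u * K u v))"
    by (subst sum.swap) (simp add: sum_distrib_right mult.assoc)
  also have "\<dots> = (\<Sum>n\<le>length v. h n * T (spow g n) v)"
    by (simp add: K kernel_op_apply sum_distrib_left)
  finally show ?thesis .
qed

lemma trace_continuous_op_peval:
  assumes T: "continuous_op T" and g: "order_ge 1 g" and pow: "\<And>n. trace (T (spow g n)) = 0"
  shows "trace (T (peval h g)) = 0"
proof (rule ext)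
  fix w
  have "trace (T (peval h g)) w = (\<Sum>n\<le>length w. h n * trace (T (spow g n)) w)"
    unfolding trace_eq_sum_cyc_class
    by (simp add: continuous_op_peval[OF T g] length_cyc_class sum_distrib_left cong: sum.cong)
       (rule sum.swap)
  then show "trace (T (peval h g)) w = 0 w" by (simp add: pow zero_fun_apply)
qed

lemma E_spow_inner:
  assumes "E a b g = sbr g c"
  shows "E a b (spow g n) = sbr (spow g n) c"
proof (induction n)
  case (Suc n)
  show ?case by (simp add: spow_Suc E_smul assms Suc.IH sbr_def smul_assoc algebra_simps)
qed (simp add: spow_0 E_one sbr_def)

definition tr_defect :: "(nat \<Rightarrow> rat) \<Rightarrow> ser" where
  "tr_defect h = trace (peval h (gen X + gen Y) - peval h (gen X) - peval h (gen Y))"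

lemma trace_E_tr_defect:
  assumes "tangential a b"
  shows "trace (E a b (peval h (gen X + gen Y) - peval h (gen X) - peval h (gen Y))) = 0"
proof -
  have "E a b (gen X + gen Y) = sbr (gen X + gen Y) 0"
    using assms by (simp add: E_linear E_gen tangential_def)
  from E_spow_inner[OF this] have "trace (E a b (peval h (gen X + gen Y))) = 0"
    by (intro trace_continuous_op_peval[OF continuous_op_E order_ge_add[OF order_ge_gen order_ge_gen]])
       (simp add: trace_linear)
  moreover have "trace (E a b (peval h (gen l))) = 0" for l
    by (rule trace_continuous_op_peval[OF continuous_op_E order_ge_gen])
       (cases l; simp add: E_spow_inner E_gen trace_sbr)
  ultimately show ?thesis by (simp add: E_linear trace_linear)
qed

lemma tr_defect_add: "tr_defect (\<lambda>n. h n + h' n) = tr_defect h + tr_defect h'"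
proof -
  have "peval (\<lambda>n. h n + h' n) g = peval h g + peval h' g" for g
    by (rule ext) (simp add: peval_def plus_fun_apply distrib_right sum.distrib)
  then show ?thesis by (simp add: tr_defect_def trace_linear algebra_simps)
qed

lemma tr_defect_ssc: "tr_defect (\<lambda>n. c * h n) = ssc c (tr_defect h)"
proof -
  have "peval (\<lambda>n. c * h n) g = ssc c (peval h g)" for g
    by (rule ext) (simp add: peval_def sum_distrib_left mult.assoc)
  then show ?thesis by (simp add: tr_defect_def trace_linear)
qed

lemma tr_defect_0: "tr_defect (\<lambda>n. 0) = 0"
  using tr_defect_ssc[of 0 "\<lambda>n. 0"] by simp

lemma divE_bracket_eq_0:
  assumes "a [] = 0" "b [] = 0" "a' [] = 0" "b' [] = 0"
    and "tangential a b" "tangential a' b'"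
    and "divE a b = tr_defect h" "divE a' b' = tr_defect h'"
  shows "divE (bracket_fst a b a' b') (bracket_snd a b a' b') = 0"
proof -
  have "trace (div_density a b) = trace (peval h (gen X + gen Y) - peval h (gen X) - peval h (gen Y))"
    "trace (div_density a' b') = trace (peval h' (gen X + gen Y) - peval h' (gen X) - peval h' (gen Y))"
    using assms(7,8) by (simp_all add: divE_eq_trace_div_density tr_defect_def)
  then show ?thesis
    using assms(1-6)
    by (simp add: divE_bracket trace_E_cong[of "div_density _ _"] trace_E_tr_defect)
qed

section \<open>The completed free Lie algebra\<close>

lemma lie_poly_zero: "0 \<in> lie_poly"
  using lie_poly.sc_in[OF lie_poly.gen_in, of 0 X] by simp

lemma lie_poly_diff: "f \<in> lie_poly \<Longrightarrow> g \<in> lie_poly \<Longrightarrow> f - g \<in> lie_poly"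
proof -
  assume f: "f \<in> lie_poly" and g: "g \<in> lie_poly"
  have "ssc (-1) g = - g" by (rule ext) (simp add: uminus_apply)
  then show ?thesis
    using lie_poly.add_in[OF f lie_poly.sc_in[OF g, of "-1"]] by simp
qed

lemma lie_poly_sum: "(\<And>x. x \<in> A \<Longrightarrow> F x \<in> lie_poly) \<Longrightarrow> sum F A \<in> lie_poly"
  by (induction A rule: infinite_finite_induct) (auto intro: lie_poly_zero lie_poly.add_in)

lemma homog_apply: "homog n f w = (if length w = n then f w else 0)"
  by (simp add: homog_def)

lemma homog_linear [simp]:
  "homog n (f + g) = homog n f + homog n g" "homog n (f - g) = homog n f - homog n g"
  "homog n (ssc c f) = ssc c (homog n f)" "homog n 0 = 0"
  by (auto simp: fun_eq_iff homog_apply plus_fun_apply minus_apply zero_fun_apply)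

lemma homog_sum: "homog n (sum F A) = (\<Sum>x\<in>A. homog n (F x))"
  by (rule ext) (simp add: homog_apply sum_fun_apply)

lemma homog_smul: "homog n (smul f g) = (\<Sum>i\<le>n. smul (homog i f) (homog (n - i) g))"
proof (rule ext)
  fix w :: "letter list"
  have "(\<Sum>i\<le>n. smul (homog i f) (homog (n - i) g)) w
      = (\<Sum>k\<le>length w. \<Sum>i\<le>n. if k = i \<and> length w = n then f (take k w) * g (drop k w) else 0)"
    unfolding sum_fun_apply smul_apply homog_apply
    by (subst sum.swap) (intro sum.cong refl; auto)
  then show "homog n (smul f g) w = (\<Sum>i\<le>n. smul (homog i f) (homog (n - i) g)) w"
    by (cases "length w = n") (simp_all add: homog_apply smul_apply)
qed

lemma homog_sbr: "homog n (sbr f g) = (\<Sum>i\<le>n. sbr (homog i f) (homog (n - i) g))"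
proof -
  have "(\<Sum>i\<le>n. smul (homog i g) (homog (n - i) f)) = (\<Sum>i\<le>n. smul (homog (n - i) g) (homog i f))"
    by (rule sum.reindex_bij_witness[of _ "\<lambda>i. n - i" "\<lambda>i. n - i"]) auto
  then show ?thesis by (simp add: sbr_def homog_smul sum_subtractf)
qed

lemma homog_gen: "homog n (gen l) = (if n = 1 then gen l else 0)"
  by (auto simp: fun_eq_iff homog_apply gen_def word_apply zero_fun_apply)

lemma lie2_add: "f \<in> lie2 \<Longrightarrow> g \<in> lie2 \<Longrightarrow> f + g \<in> lie2"
  by (simp add: lie2_def lie_poly.add_in)
lemma lie2_diff: "f \<in> lie2 \<Longrightarrow> g \<in> lie2 \<Longrightarrow> f - g \<in> lie2"
  by (simp add: lie2_def lie_poly_diff)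
lemma lie2_ssc: "f \<in> lie2 \<Longrightarrow> ssc c f \<in> lie2"
  by (simp add: lie2_def lie_poly.sc_in)
lemma lie2_zero: "0 \<in> lie2"
  by (simp add: lie2_def lie_poly_zero)
lemma lie2_sbr: "f \<in> lie2 \<Longrightarrow> g \<in> lie2 \<Longrightarrow> sbr f g \<in> lie2"
  by (simp add: lie2_def homog_sbr lie_poly_sum lie_poly.br_in)
lemma gen_in_lie2: "gen l \<in> lie2"
  by (simp add: lie2_def homog_gen lie_poly.gen_in lie_poly_zero)

lemma lie_poly_subset_lie2: "f \<in> lie_poly \<Longrightarrow> f \<in> lie2"
  by (induction rule: lie_poly.induct) (blast intro: gen_in_lie2 lie2_add lie2_ssc lie2_sbr)+

lemma der_lie_poly:
  assumes \<delta>: "const_free \<delta>" "\<And>l. \<delta> l \<in> lie2"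
  shows "P \<in> lie_poly \<Longrightarrow> der \<delta> P \<in> lie2"
proof (induction rule: lie_poly.induct)
  case (br_in f g)
  then show ?case
    by (simp add: der_sbr[OF \<delta>(1)] lie2_add lie2_sbr lie_poly_subset_lie2)
qed (simp_all only: der_gen der_linear assms lie2_add lie2_ssc)

lemma homog_der_truncate: "homog n (der \<delta> c) = homog n (der \<delta> (\<Sum>m\<le>n. homog m c))"
proof (rule ext)
  fix v :: "letter list"
  have "der \<delta> c v = der \<delta> (\<Sum>m\<le>n. homog m c) v" if "length v = n"
    unfolding der_def
  proof (rule sum.cong[OF refl])
    fix u :: "letter list" assume "u \<in> {u. length u \<le> length v}"
    then have "(\<Sum>m\<le>n. homog m c) u = c u"
      using that by (simp add: sum_fun_apply homog_apply)
    then show "c u * der_word \<delta> u v = (\<Sum>m\<le>n. homog m c) u * der_word \<delta> u v" by simp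
  qed
  then show "homog n (der \<delta> c) v = homog n (der \<delta> (\<Sum>m\<le>n. homog m c)) v"
    by (simp add: homog_apply)
qed

lemma der_lie2:
  assumes \<delta>: "const_free \<delta>" "\<And>l. \<delta> l \<in> lie2" and c: "c \<in> lie2"
  shows "der \<delta> c \<in> lie2"
  unfolding lie2_def mem_Collect_eq
proof
  fix n
  have "homog n (der \<delta> c) = (\<Sum>m\<le>n. homog n (der \<delta> (homog m c)))"
    by (subst homog_der_truncate)
       (simp only: continuous_op_sum[OF continuous_op_der[OF \<delta>(1)]] homog_sum)
  also have "\<dots> \<in> lie_poly"
  proof (rule lie_poly_sum)
    fix m
    have "homog m c \<in> lie_poly" using c by (simp add: lie2_def)
    then show "homog n (der \<delta> (homog m c)) \<in> lie_poly"
      using der_lie_poly[OF \<delta>] by (simp add: lie2_def)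
  qed
  finally show "homog n (der \<delta> c) \<in> lie_poly" .
qed

lemma E_lie2: "a \<in> lie2 \<Longrightarrow> b \<in> lie2 \<Longrightarrow> c \<in> lie2 \<Longrightarrow> E a b c \<in> lie2"
  unfolding E_eq_der
proof (rule der_lie2[OF const_free_E_gens])
  fix l assume "a \<in> lie2" "b \<in> lie2"
  then show "E_gens a b l \<in> lie2" by (cases l) (simp_all add: E_gens_def lie2_sbr[OF gen_in_lie2])
qed

lemma krv_pair_iff:
  "krv_pair a b \<longleftrightarrow>
     a \<in> lie2 \<and> b \<in> lie2 \<and> a [X] = 0 \<and> b [Y] = 0 \<and> tangential a b \<and>
     (\<exists>h::nat \<Rightarrow> rat. h 0 = 0 \<and> h 1 = 0 \<and> divE a b = tr_defect h) \<and>
     order_ge 3 a \<and> order_ge 3 b"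
  unfolding krv_pair_def tr_defect_def order_ge_def tangential_def by blast

lemma krv_pair_0: "krv_pair 0 0"
proof -
  have "divE 0 0 = tr_defect (\<lambda>n. 0)"
    by (simp add: divE_def trace_linear tr_defect_0)
  then show ?thesis
    by (auto simp: krv_pair_iff lie2_zero zero_fun_apply tangential_def order_ge_def
        intro!: exI[of _ "\<lambda>n. 0"])
qed

lemma krv_pair_add:
  assumes "krv_pair a b" "krv_pair a' b'"
  shows "krv_pair (a + a') (b + b')"
proof -
  obtain h h' where "h 0 = 0" "h 1 = 0" "divE a b = tr_defect h"
    "h' 0 = 0" "h' 1 = 0" "divE a' b' = tr_defect h'"
    using assms by (auto simp: krv_pair_iff)
  then have "\<exists>h::nat \<Rightarrow> rat. h 0 = 0 \<and> h 1 = 0 \<and> divE (a + a') (b + b') = tr_defect h"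
    by (intro exI[of _ "\<lambda>n. h n + h' n"]) (simp add: divE_add tr_defect_add)
  moreover have "tangential (a + a') (b + b')"
    using assms by (simp add: krv_pair_iff tangential_def algebra_simps)
  ultimately show ?thesis
    using assms by (simp add: krv_pair_iff lie2_add order_ge_add plus_fun_apply)
qed

lemma krv_pair_ssc:
  assumes "krv_pair a b"
  shows "krv_pair (ssc c a) (ssc c b)"
proof -
  obtain h where "h 0 = 0" "h 1 = 0" "divE a b = tr_defect h"
    using assms by (auto simp: krv_pair_iff)
  then have "\<exists>h::nat \<Rightarrow> rat. h 0 = 0 \<and> h 1 = 0 \<and> divE (ssc c a) (ssc c b) = tr_defect h"
    by (intro exI[of _ "\<lambda>n. c * h n"]) (simp add: divE_ssc tr_defect_ssc)
  moreover have "tangential (ssc c a) (ssc c b)"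
    using assms ssc_add[of c "sbr (gen X) a" "sbr (gen Y) b", symmetric]
    by (simp add: krv_pair_iff tangential_def)
  ultimately show ?thesis
    using assms by (simp add: krv_pair_iff lie2_ssc order_ge_def)
qed

lemma order_ge_bracket:
  assumes "order_ge p f" "order_ge p g"
  shows "order_ge p (sbr f g + E a b g - E a' b' f)"
proof -
  have "order_ge p (sbr f g)"
    unfolding sbr_def using order_ge_smul[OF assms] order_ge_smul[OF assms(2,1)]
    by (intro order_ge_diff; auto intro: order_ge_mono)
  then show ?thesis
    by (intro order_ge_diff order_ge_add continuous_op_order_ge[OF continuous_op_E] assms)
qed

lemma krv_pair_bracket:
  assumes "krv_pair a b" "krv_pair a' b'"
  shows "krv_pair (bracket_fst a b a' b') (bracket_snd a b a' b')"
proof -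
  obtain h h' where div: "divE a b = tr_defect h" "divE a' b' = tr_defect h'"
    using assms by (auto simp: krv_pair_iff)
  have lie: "a \<in> lie2" "b \<in> lie2" "a' \<in> lie2" "b' \<in> lie2"
    and tan: "tangential a b" "tangential a' b'"
    and ord: "order_ge 3 a" "order_ge 3 b" "order_ge 3 a'" "order_ge 3 b'"
    using assms by (simp_all add: krv_pair_iff)
  have ord_bracket: "order_ge 3 (bracket_fst a b a' b')" "order_ge 3 (bracket_snd a b a' b')"
    using ord by (simp_all add: bracket_fst_def bracket_snd_def order_ge_bracket)
  have "divE (bracket_fst a b a' b') (bracket_snd a b a' b') = tr_defect (\<lambda>n. 0)"
    using divE_bracket_eq_0[OF _ _ _ _ tan div] ord by (simp add: order_ge_def tr_defect_0)
  moreover have "bracket_fst a b a' b' \<in> lie2" "bracket_snd a b a' b' \<in> lie2"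
    using lie by (simp_all add: bracket_fst_def bracket_snd_def lie2_add lie2_diff lie2_sbr E_lie2)
  ultimately show ?thesis
    using ord_bracket tangential_bracket[OF tan] unfolding krv_pair_iff
    by (auto simp: order_ge_def)
qed

lemma W_krv_iff: "f \<in> W_krv \<longleftrightarrow> (\<exists>a b. krv_pair a b \<and> f = nu b)"
  by (auto simp: W_krv_def V_krv_def)

lemma nu_bracket_snd:
  "tangential a b \<Longrightarrow> tangential a' b' \<Longrightarrow> nu (bracket_snd a b a' b') = poisson (nu b) (nu b')"
  by (simp add: bracket_snd_def nu_linear nu_sbr nu_E poisson_def)

lemma W_krv_poisson:
  assumes "f \<in> W_krv" "g \<in> W_krv"
  shows "poisson f g \<in> W_krv"
proof -
  obtain a b a' b' where k: "krv_pair a b" "krv_pair a' b'" and "f = nu b" "g = nu b'"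
    using assms unfolding W_krv_iff by blast
  then have "poisson f g = nu (bracket_snd a b a' b')"
    by (simp add: nu_bracket_snd krv_pair_iff)
  with krv_pair_bracket[OF k] show ?thesis
    unfolding W_krv_iff by blast
qed

lemma W_krv_add:
  assumes "f \<in> W_krv" "g \<in> W_krv"
  shows "f + g \<in> W_krv"
proof -
  obtain a b a' b' where k: "krv_pair a b" "krv_pair a' b'" and "f = nu b" "g = nu b'"
    using assms unfolding W_krv_iff by blast
  then have "f + g = nu (b + b')"
    by (simp add: nu_linear)
  with krv_pair_add[OF k] show ?thesis
    unfolding W_krv_iff by blast
qed

lemma W_krv_ssc:
  assumes "f \<in> W_krv"
  shows "ssc c f \<in> W_krv"
proof -
  obtain a b where k: "krv_pair a b" and "f = nu b"
    using assms unfolding W_krv_iff by blast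
  then have "ssc c f = nu (ssc c b)"
    by (simp add: nu_linear)
  with krv_pair_ssc[OF k] show ?thesis
    unfolding W_krv_iff by blast
qed

lemma W_krv_zero: "0 \<in> W_krv"
  using krv_pair_0 nu_linear(4) unfolding W_krv_iff by metis

theorem proposition24:
  shows "(\<forall>f\<in>W_krv. \<forall>g\<in>W_krv. poisson f g \<in> W_krv) \<and> lie_algebra_on W_krv poisson"
  unfolding lie_algebra_on_def
  by (intro conjI ballI allI W_krv_poisson W_krv_add W_krv_ssc W_krv_zero poisson_bilinear
      poisson_jacobi)

end
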